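(* Let $G=(V,E)$ have $|V|=2$, let $N>3$, $\varepsilon\in(0,\frac1{N-1}]$ and $s_0\in S_{nc}$. Then for every $\gamma\in(0,1)$, every trigger strategies profile $\bar\sigma$ of $\Gamma_N(G|s_0,\gamma,\varepsilon)$ is nonpositional.
   Context: Setting. $G=(V,E)$ is a finite, simple, connected, undirected graph; $N\ge 3$ is an integer; $\gamma\in(0,1)$ and $\varepsilon\in[0,\frac1{N-1}]$ are parameters. There are $N$ tokens: cops $C_1,\dots,C_{N-1}$ (tokens $1,\dots,N-1$) and the robber $R$ (token $N$). A state is $s=(x^1,\dots,x^N,n)$ where $x^i\in V$ is the position of token $i$ and $n\in\{1,\dots,N\}$ is the token that moves next; $S^n$ denotes the set of states with token $n$ to move. A state is a capture state if $x^i=x^N$ for some $i\le N-1$; $S_{nc}$ is the set of noncapture states. In each turn exactly one token, the one to move, moves to a vertex of its closed neighbourhood (it may stay put); the order of moves is $C_1,C_2,\dots,C_{N-1},R,C_1,\dots$. Starting from an initial state $s_0\in S_{nc}$ at time $0$, the capture time is the first time $t$ at which a capture state occurs (infinite if never); after capture the game is over. Auxiliary games. For $m\in\{1,\dots,N\}$, $\Gamma_N^m(G|s_0,\gamma,\varepsilon)$ is the two-player zero-sum game in which player $P_m$ controls token $m$ and player $P_{-m}$ controls all other tokens, with the following payoff to $P_m$ ($P_{-m}$ receives its negative): $0$ if no capture ever occurs; if capture occurs at time $t$: for $m=N$, $-\gamma^t$; for $m\le N-1$, $\frac{1-\varepsilon}{K}\gamma^t$ if exactly $K\in\{1,\dots,N-2\}$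 cops, including $C_m$, are on the robber's vertex, $\frac{\varepsilon}{N-K-1}\gamma^t$ if exactly $K\in\{1,\dots,N-2\}$ cops, not including $C_m$, are on the robber's vertex, and $\frac{\gamma^t}{N-1}$ if all $N-1$ cops are on the robber's vertex. $\Gamma^N_N$ is the modified cops-and-robber (CR) game. A pure positional strategy for token $n$ maps each state in $S^n\cap S_{nc}$ to an allowed next vertex. Each $\Gamma^m_N$ has optimal pure positional strategies (optimal from every initial state). For $m,n\in\{1,\dots,N\}$, $\phi^n_m$ denotes the strategy of token $n$ in a chosen pair of optimal pure positional strategies of $\Gamma^m_N$ (so $\phi^m_m$ is $P_m$'s optimal strategy and $(\phi^n_m)_{n\ne m}$ is $P_{-m}$'s). $\widehat\Sigma^n$ is the set of pure positional strategies of token $n$ that are components of optimal strategy pairs of $\Gamma^N_N$ (CR-optimal strategies). Trigger strategies. Given a choice of $(\phi^n_m)_{n,m}$, the trigger strategies profile $\bar\sigma=(\bar\sigma^1,\dots,\bar\sigma^N)$ of the $N$-player SCAR game $\Gamma_N(G|s_0,\gamma,\varepsilon)$ (same board and moves; player $n$ controls token $n$) is: token $n$, at current state $s$, plays $\phi^n_n(s)$ as long as every other player $m$ has followed $\phi^m_m$, and plays $\phi^n_m(s)$ from the moment a player $m\neq n$ deviates from $\phi^m_m$. Different choices of the optimal strategies give different trigger strategies profiles. $\bar\sigma$ is called positional if for all $n,m\in\{1,\dots,N\}$ there is $\widehat\sigma^n\in\widehat\Sigma^n$ with $\phi^n_m(s)=\widehat\sigma^n(s)$ for every state $s\in S^n\cap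 S_{nc}$ reachable from $s_0$ by a finite sequence of legal moves passing only through noncapture states; otherwise $\bar\sigma$ is nonpositional. *)

theory Defs
  imports Complex_Main "HOL-Library.FuncSet"
begin

text \<open>A state: positions of tokens 1..N (extensional function, undefined outside 1..N)
  and the token that moves next.\<close>
type_synonym 'v state = "(nat \<Rightarrow> 'v) \<times> nat"

definition simple_graph :: "'v set \<Rightarrow> ('v \<Rightarrow> 'v \<Rightarrow> bool) \<Rightarrow> bool" where
  "simple_graph V E \<longleftrightarrow> finite V \<and> V \<noteq> {} \<and>
     (\<forall>u v. E u v \<longrightarrow> u \<in> V \<and> v \<in> V \<and> u \<noteq> v \<and> E v u)"

definition connected_graph :: "'v set \<Rightarrow> ('v \<Rightarrow> 'v \<Rightarrow> bool) \<Rightarrow> bool" where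
  "connected_graph V E \<longleftrightarrow> (\<forall>u\<in>V. \<forall>v\<in>V. E\<^sup>*\<^sup>* u v)"

definition cnbhd :: "'v set \<Rightarrow> ('v \<Rightarrow> 'v \<Rightarrow> bool) \<Rightarrow> 'v \<Rightarrow> 'v set" where
  "cnbhd V E u = {w \<in> V. w = u \<or> E u w}"

definition game_states :: "nat \<Rightarrow> 'v set \<Rightarrow> 'v state set" where
  "game_states N V = {(x, n). x \<in> {1..N} \<rightarrow>\<^sub>E V \<and> n \<in> {1..N}}"

text \<open>Capture: some cop (token 1..N-1) on the robber's (token N) vertex.\<close>
definition is_capture :: "nat \<Rightarrow> 'v state \<Rightarrow> bool" where
  "is_capture N s \<longleftrightarrow> (\<exists>i\<in>{1..N-1}. fst s i = fst s N)"

definition next_token :: "nat \<Rightarrow> nat \<Rightarrow> nat" where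
  "next_token N n = n mod N + 1"

definition step :: "nat \<Rightarrow> 'v state \<Rightarrow> 'v \<Rightarrow> 'v state" where
  "step N s v = ((fst s)(snd s := v), next_token N (snd s))"

definition legal_strategy ::
  "nat \<Rightarrow> 'v set \<Rightarrow> ('v \<Rightarrow> 'v \<Rightarrow> bool) \<Rightarrow> nat \<Rightarrow> ('v state list \<Rightarrow> 'v) \<Rightarrow> bool" where
  "legal_strategy N V E n \<sigma> \<longleftrightarrow>
     (\<forall>h. h \<noteq> [] \<and> last h \<in> game_states N V \<and> snd (last h) = n \<and> \<not> is_capture N (last h)
          \<longrightarrow> \<sigma> h \<in> cnbhd V E (fst (last h) n))"

definition legal_pos_strategy ::
  "nat \<Rightarrow> 'v set \<Rightarrow> ('v \<Rightarrow> 'v \<Rightarrow> bool) \<Rightarrow> nat \<Rightarrow> ('v state \<Rightarrow> 'v) \<Rightarrow> bool" where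
  "legal_pos_strategy N V E n f \<longleftrightarrow>
     (\<forall>s\<in>game_states N V. snd s = n \<and> \<not> is_capture N s \<longrightarrow> f s \<in> cnbhd V E (fst s n))"

definition pos_to_hist :: "('v state \<Rightarrow> 'v) \<Rightarrow> ('v state list \<Rightarrow> 'v)" where
  "pos_to_hist f = (\<lambda>h. f (last h))"

fun history :: "nat \<Rightarrow> (nat \<Rightarrow> 'v state list \<Rightarrow> 'v) \<Rightarrow> 'v state \<Rightarrow> nat \<Rightarrow> 'v state list" where
  "history N \<tau> s0 0 = [s0]"
| "history N \<tau> s0 (Suc t) =
     (let h = history N \<tau> s0 t in h @ [step N (last h) (\<tau> (snd (last h)) h)])"

definition play :: "nat \<Rightarrow> (nat \<Rightarrow> 'v state list \<Rightarrow> 'v) \<Rightarrow> 'v state \<Rightarrow> nat \<Rightarrow> 'v state" where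
  "play N \<tau> s0 t = last (history N \<tau> s0 t)"

definition reward :: "nat \<Rightarrow> real \<Rightarrow> nat \<Rightarrow> 'v state \<Rightarrow> real" where
  "reward N \<epsilon> m s =
     (if m = N then -1
      else (let K = card {i\<in>{1..N-1}. fst s i = fst s N} in
            if K = N - 1 then 1 / real (N - 1)
            else if fst s m = fst s N then (1 - \<epsilon>) / real K
            else \<epsilon> / real (N - K - 1)))"

definition payoff ::
  "nat \<Rightarrow> real \<Rightarrow> real \<Rightarrow> nat \<Rightarrow> (nat \<Rightarrow> 'v state list \<Rightarrow> 'v) \<Rightarrow> 'v state \<Rightarrow> real" where
  "payoff N \<gamma> \<epsilon> m \<tau> s0 =
     (if \<exists>t. is_capture N (play N \<tau> s0 t)
      then (let t0 = (LEAST t. is_capture N (play N \<tau> s0 t))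
            in reward N \<epsilon> m (play N \<tau> s0 t0) * \<gamma> ^ t0)
      else 0)"

text \<open>phi (one pure positional strategy per token) is a pair of optimal pure positional
  strategies of Gamma^m_N (token m vs. all other tokens), optimal from every initial
  noncapture state: a saddle point against arbitrary (history-dependent) deviations.\<close>
definition optimal_pair ::
  "nat \<Rightarrow> 'v set \<Rightarrow> ('v \<Rightarrow> 'v \<Rightarrow> bool) \<Rightarrow> real \<Rightarrow> real \<Rightarrow> nat \<Rightarrow> (nat \<Rightarrow> 'v state \<Rightarrow> 'v) \<Rightarrow> bool" where
  "optimal_pair N V E \<gamma> \<epsilon> m \<phi> \<longleftrightarrow>
     (\<forall>n\<in>{1..N}. legal_pos_strategy N V E n (\<phi> n)) \<and>
     (\<forall>s\<in>game_states N V. \<not> is_capture N s \<longrightarrow>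
        (let \<tau> = (\<lambda>n. pos_to_hist (\<phi> n)) in
          (\<forall>\<alpha>. legal_strategy N V E m \<alpha> \<longrightarrow>
               payoff N \<gamma> \<epsilon> m (\<tau>(m := \<alpha>)) s \<le> payoff N \<gamma> \<epsilon> m \<tau> s) \<and>
          (\<forall>\<beta>. (\<forall>n\<in>{1..N} - {m}. legal_strategy N V E n (\<beta> n)) \<longrightarrow>
               payoff N \<gamma> \<epsilon> m \<tau> s \<le> payoff N \<gamma> \<epsilon> m (\<beta>(m := \<tau> m)) s)))"

text \<open>CR-optimal strategies of token n: components of optimal pure positional strategy pairs
  of the modified CR game Gamma^N_N.\<close>
definition CR_optimal ::
  "nat \<Rightarrow> 'v set \<Rightarrow> ('v \<Rightarrow> 'v \<Rightarrow> bool) \<Rightarrow> real \<Rightarrow> real \<Rightarrow> nat \<Rightarrow> ('v state \<Rightarrow> 'v) \<Rightarrow> bool" where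
  "CR_optimal N V E \<gamma> \<epsilon> n f \<longleftrightarrow> (\<exists>\<phi>. optimal_pair N V E \<gamma> \<epsilon> N \<phi> \<and> \<phi> n = f)"

inductive_set reachable ::
  "nat \<Rightarrow> 'v set \<Rightarrow> ('v \<Rightarrow> 'v \<Rightarrow> bool) \<Rightarrow> 'v state \<Rightarrow> 'v state set"
  for N V E s0 where
  init: "s0 \<in> reachable N V E s0"
| mv: "s \<in> reachable N V E s0 \<Longrightarrow> \<not> is_capture N s \<Longrightarrow> v \<in> cnbhd V E (fst s (snd s))
       \<Longrightarrow> step N s v \<in> reachable N V E s0"

text \<open>A choice phi n m (strategy of token n in the chosen optimal pair of Gamma^m_N),
  which determines a trigger strategies profile.\<close>
definition trigger_choice ::
  "nat \<Rightarrow> 'v set \<Rightarrow> ('v \<Rightarrow> 'v \<Rightarrow> bool) \<Rightarrow> real \<Rightarrow> real \<Rightarrow> (nat \<Rightarrow> nat \<Rightarrow> 'v state \<Rightarrow> 'v) \<Rightarrow> bool" where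
  "trigger_choice N V E \<gamma> \<epsilon> \<phi> \<longleftrightarrow> (\<forall>m\<in>{1..N}. optimal_pair N V E \<gamma> \<epsilon> m (\<lambda>n. \<phi> n m))"

definition positional_trigger ::
  "nat \<Rightarrow> 'v set \<Rightarrow> ('v \<Rightarrow> 'v \<Rightarrow> bool) \<Rightarrow> real \<Rightarrow> real \<Rightarrow> 'v state \<Rightarrow> (nat \<Rightarrow> nat \<Rightarrow> 'v state \<Rightarrow> 'v) \<Rightarrow> bool" where
  "positional_trigger N V E \<gamma> \<epsilon> s0 \<phi> \<longleftrightarrow>
     (\<forall>n\<in>{1..N}. \<forall>m\<in>{1..N}. \<exists>f. CR_optimal N V E \<gamma> \<epsilon> n f \<and>
        (\<forall>s\<in>reachable N V E s0. snd s = n \<and> \<not> is_capture N s \<longrightarrow> \<phi> n m s = f s))"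

end

theory Submission
  imports Defs
begin

text \<open>On two vertices every token is adjacent to the robber. Let cop \<open>C\<^sub>1\<close> be to move in a
  noncapture state. In the CR game \<open>\<Gamma>\<^sup>N\<^sub>N\<close> the robber loses least by being caught as late as
  possible, so every CR-optimal strategy of \<open>C\<^sub>1\<close> captures at once: otherwise the cops could
  improve by capturing at time 1. In \<open>\<Gamma>\<^sup>3\<^sub>N\<close>, however, cop \<open>C\<^sub>1\<close> (a member of \<open>P\<^sub>-\<^sub>3\<close>) must not
  capture at once: \<open>C\<^sub>3\<close> would get \<open>\<epsilon>/(N-2)\<cdot>\<gamma>\<close>, whereas letting \<open>C\<^sub>1\<close> wait and \<open>C\<^sub>2\<close> capture
  gives \<open>C\<^sub>3\<close> only \<open>\<epsilon>/(N-2)\<cdot>\<gamma>\<^sup>2\<close>. Hence \<open>\<phi>\<^sup>1\<^sub>3\<close> disagrees with every CR-optimal strategy on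
  the (reachable) state in which only the turn has passed to \<open>C\<^sub>1\<close>.\<close>

definition complete_graph :: "'v set \<Rightarrow> ('v \<Rightarrow> 'v \<Rightarrow> bool) \<Rightarrow> bool" where
  "complete_graph V E \<longleftrightarrow> (\<forall>u\<in>V. \<forall>w\<in>V. u \<noteq> w \<longrightarrow> E u w)"

lemma complete_graph_if_card_eq_2:
  assumes "simple_graph V E" "connected_graph V E" "card V = 2"
  shows "complete_graph V E"
  unfolding complete_graph_def
proof (intro ballI impI)
  fix u w assume u: "u \<in> V" and w: "w \<in> V" and "u \<noteq> w"
  have "V = {u, w}"
  proof (rule card_subset_eq[symmetric])
    show "finite V" using assms(1) by (simp add: simple_graph_def)
    show "{u, w} \<subseteq> V" using u w by simp
    show "card {u, w} = card V" using assms(3) \<open>u \<noteq> w\<close> by simp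
  qed
  have "E\<^sup>*\<^sup>* u w" using assms(2) u w by (simp add: connected_graph_def)
  then obtain y where "E u y" using \<open>u \<noteq> w\<close> by (metis converse_rtranclpE)
  with assms(1) have "y \<in> V" "y \<noteq> u" by (auto simp: simple_graph_def)
  with \<open>V = {u, w}\<close> \<open>E u y\<close> show "E u w" by auto
qed

lemma cnbhd_complete_graph:
  "complete_graph V E \<Longrightarrow> u \<in> V \<Longrightarrow> cnbhd V E u = V"
  by (auto simp: complete_graph_def cnbhd_def)

lemma game_states_position:
  "s \<in> game_states N V \<Longrightarrow> i \<in> {1..N} \<Longrightarrow> fst s i \<in> V"
  by (auto simp: game_states_def)

lemma legal_strategy_stay:
  "n \<in> {1..N} \<Longrightarrow> legal_strategy N V E n (\<lambda>h. fst (last h) n)"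
  by (auto simp: legal_strategy_def cnbhd_def game_states_position)

lemma legal_strategy_chase_robber:
  assumes "complete_graph V E" "n \<in> {1..N}"
  shows "legal_strategy N V E n (\<lambda>h. fst (last h) N)"
  using assms by (auto simp: legal_strategy_def cnbhd_complete_graph game_states_position)

lemma play_0 [simp]: "play N \<tau> s 0 = s"
  by (simp add: play_def)

lemma play_Suc:
  "play N \<tau> s (Suc t) = step N (play N \<tau> s t) (\<tau> (snd (play N \<tau> s t)) (history N \<tau> s t))"
  by (simp add: play_def Let_def)

(* Stated after play_0 and play_Suc: as a simp rule it folds play_def back. *)
lemma last_history [simp]: "last (history N \<tau> s t) = play N \<tau> s t"
  by (simp add: play_def)

lemma is_capture_step_cop:
  assumes "snd s \<in> {1..N-1}" "\<not> is_capture N s"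
  shows "is_capture N (step N s v) \<longleftrightarrow> v = fst s N"
  using assms by (auto simp: is_capture_def step_def)

lemma reward_single_capturer:
  assumes "\<not> is_capture N s" "i \<in> {1..N-1}" "m \<in> {1..N-1}" "m \<noteq> i"
  shows "reward N \<epsilon> m ((fst s)(i := fst s N), n) = \<epsilon> / real (N - 2)"
proof -
  have "{j\<in>{1..N-1}. ((fst s)(i := fst s N)) j = ((fst s)(i := fst s N)) N} = {i}"
    using assms(1,2) by (auto simp: is_capture_def)
  moreover have "N > 2" using assms(2-4) by auto
  ultimately show ?thesis
    using assms(1-4) by (auto simp: reward_def is_capture_def numeral_2_eq_2)
qed

lemma payoff_eq_at_capture_time:
  assumes "is_capture N (play N \<tau> s t)" "\<forall>t'<t. \<not> is_capture N (play N \<tau> s t')"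
  shows "payoff N \<gamma> \<epsilon> m \<tau> s = reward N \<epsilon> m (play N \<tau> s t) * \<gamma> ^ t"
proof -
  have "(LEAST t. is_capture N (play N \<tau> s t)) = t"
    by (rule Least_equality) (use assms not_less in auto)
  then show ?thesis using assms(1) unfolding payoff_def by (auto simp: Let_def)
qed

lemma robber_payoff_gt_if_no_capture_before_2:
  assumes "\<not> is_capture N (play N \<tau> s 0)" "\<not> is_capture N (play N \<tau> s 1)"
    and "0 < \<gamma>" "\<gamma> < 1"
  shows "payoff N \<gamma> \<epsilon> N \<tau> s > - \<gamma>"
proof (cases "\<exists>t. is_capture N (play N \<tau> s t)")
  case True
  define t0 where "t0 = (LEAST t. is_capture N (play N \<tau> s t))"
  have "is_capture N (play N \<tau> s t0)" using True unfolding t0_def by (metis LeastI)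
  with assms(1,2) have "t0 \<ge> 2" by (metis One_nat_def less_2_cases not_le)
  then have "\<gamma> ^ t0 \<le> \<gamma> ^ 2" using assms(3,4) by (intro power_decreasing) auto
  also have "\<dots> < \<gamma>" using assms(3,4) by (simp add: power2_eq_square)
  finally show ?thesis
    using True unfolding payoff_def t0_def by (simp add: Let_def reward_def)
next
  case False
  then show ?thesis using assms(3) unfolding payoff_def by simp
qed

lemma optimal_pair_deviation_of_others:
  assumes "optimal_pair N V E \<gamma> \<epsilon> m \<phi>" "s \<in> game_states N V" "\<not> is_capture N s"
    and "\<forall>n\<in>{1..N} - {m}. legal_strategy N V E n (\<beta> n)"
  shows "payoff N \<gamma> \<epsilon> m (\<lambda>n. pos_to_hist (\<phi> n)) s
           \<le> payoff N \<gamma> \<epsilon> m (\<beta>(m := pos_to_hist (\<phi> m))) s"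
  using assms unfolding optimal_pair_def Let_def by blast

lemma reachable_pass_turns:
  assumes "s0 \<in> game_states N V" "\<not> is_capture N s0" "n \<in> {1..N}"
  shows "(fst s0, n) \<in> reachable N V E s0"
proof -
  have N: "N > 0" and s0: "snd s0 \<in> {1..N}" using assms(1,3) by (auto simp: game_states_def)
  have "(fst s0, (snd s0 - 1 + j) mod N + 1) \<in> reachable N V E s0" for j
  proof (induction j)
    case 0
    from s0 have "(snd s0 - 1) mod N + 1 = snd s0" by auto
    then show ?case using reachable.init by simp
  next
    case (Suc j)
    let ?s = "(fst s0, (snd s0 - 1 + j) mod N + 1)"
    have "(snd s0 - 1 + j) mod N + 1 \<in> {1..N}" using N by (simp add: Suc_leI)
    then have "fst ?s (snd ?s) \<in> cnbhd V E (fst ?s (snd ?s))"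
      using game_states_position[OF assms(1)] by (simp add: cnbhd_def)
    moreover have "\<not> is_capture N ?s" using assms(2) by (simp add: is_capture_def)
    moreover have "step N ?s (fst ?s (snd ?s)) = (fst s0, (snd s0 - 1 + Suc j) mod N + 1)"
      by (simp add: step_def next_token_def mod_Suc_eq)
    ultimately show ?case using reachable.mv[OF Suc] by metis
  qed
  moreover have "(snd s0 - 1 + (N - (snd s0 - 1) + (n - 1))) mod N + 1 = n"
    using s0 assms(3) by (cases n) (auto simp: add.commute)
  ultimately show ?thesis by metis
qed

lemma CR_optimal_cop_captures:
  assumes "complete_graph V E" "k \<in> {1..N-1}"
    and "s \<in> game_states N V" "snd s = k" "\<not> is_capture N s"
    and "0 < \<gamma>" "\<gamma> < 1"
    and "CR_optimal N V E \<gamma> \<epsilon> k f"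
  shows "f s = fst s N"
proof (rule ccontr)
  assume miss: "f s \<noteq> fst s N"
  obtain \<psi> where opt: "optimal_pair N V E \<gamma> \<epsilon> N \<psi>" and f: "\<psi> k = f"
    using assms(8) by (auto simp: CR_optimal_def)
  define chase :: "nat \<Rightarrow> 'a state list \<Rightarrow> 'a" where "chase = (\<lambda>n h. fst (last h) N)"
  let ?\<tau> = "\<lambda>n. pos_to_hist (\<psi> n)"
  let ?dev = "chase(N := pos_to_hist (\<psi> N))"
  have cop: "snd s \<in> {1..N-1}" and "k \<noteq> N" using assms(2,4) by auto
  have "- \<gamma> < payoff N \<gamma> \<epsilon> N ?\<tau> s"
  proof (rule robber_payoff_gt_if_no_capture_before_2)
    have "play N ?\<tau> s 1 = step N s (f s)"
      using assms(4) f by (simp add: play_Suc[where t = 0, simplified] pos_to_hist_def)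
    then show "\<not> is_capture N (play N ?\<tau> s 1)"
      using is_capture_step_cop[OF cop assms(5)] miss by simp
  qed (use assms(5-7) in auto)
  also have "\<dots> \<le> payoff N \<gamma> \<epsilon> N ?dev s"
    using optimal_pair_deviation_of_others[OF opt assms(3,5)] assms(1)
    by (simp add: chase_def legal_strategy_chase_robber)
  also have "\<dots> = - \<gamma>"
  proof -
    have "play N ?dev s 1 = step N s (fst s N)"
      using assms(4) \<open>k \<noteq> N\<close> by (simp add: play_Suc[where t = 0, simplified] chase_def)
    then have "is_capture N (play N ?dev s 1)"
      using is_capture_step_cop[OF cop assms(5)] by simp
    then show ?thesis
      using payoff_eq_at_capture_time[of N ?dev s 1] assms(5) by (simp add: reward_def)
  qed
  finally show False by simp
qed

lemma optimal_pair_cop_defers_capture: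
  assumes "complete_graph V E" "k \<in> {1..N-1}" "Suc k \<in> {1..N-1}"
    and "m \<in> {1..N-1}" "m \<noteq> k" "m \<noteq> Suc k"
    and "s \<in> game_states N V" "snd s = k" "\<not> is_capture N s"
    and "0 < \<epsilon>" "0 < \<gamma>" "\<gamma> < 1"
    and "optimal_pair N V E \<gamma> \<epsilon> m \<phi>"
  shows "\<phi> k s \<noteq> fst s N"
proof
  assume capture: "\<phi> k s = fst s N"
  define \<beta> :: "nat \<Rightarrow> 'a state list \<Rightarrow> 'a"
    where "\<beta> = (\<lambda>n h. if n = Suc k then fst (last h) N else fst (last h) n)"
  define c where "c = \<epsilon> / real (N - 2)"
  let ?\<tau> = "\<lambda>n. pos_to_hist (\<phi> n)"
  let ?dev = "\<beta>(m := pos_to_hist (\<phi> m))"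
  have cop: "snd s \<in> {1..N-1}" and cop': "snd (fst s, Suc k) \<in> {1..N-1}"
    using assms(2,3,8) by auto
  have nc': "\<not> is_capture N (fst s, Suc k)" using assms(9) by (simp add: is_capture_def)
  have "c * \<gamma> = payoff N \<gamma> \<epsilon> m ?\<tau> s"
  proof -
    have p1: "play N ?\<tau> s 1 = ((fst s)(k := fst s N), next_token N k)"
      using assms(8) capture by (simp add: play_Suc[where t = 0, simplified] pos_to_hist_def step_def)
    then have "is_capture N (play N ?\<tau> s 1)"
      using is_capture_step_cop[OF cop assms(9)] assms(8) by (simp add: step_def)
    then show ?thesis
      using payoff_eq_at_capture_time[of N ?\<tau> s 1] assms(9) p1
        reward_single_capturer[OF assms(9,2,4,5)] by (simp add: c_def)
  qed
  also have "\<dots> \<le> payoff N \<gamma> \<epsilon> m ?dev s"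
  proof (rule optimal_pair_deviation_of_others[OF assms(13,7,9)], intro ballI)
    fix n assume "n \<in> {1..N} - {m}"
    then show "legal_strategy N V E n (\<beta> n)" using assms(1) by (cases "n = Suc k")
        (simp_all add: \<beta>_def legal_strategy_chase_robber legal_strategy_stay)
  qed
  also have "\<dots> = c * \<gamma> ^ 2"
  proof -
    have "next_token N k = Suc k" using assms(3) by (simp add: next_token_def)
    then have p1: "play N ?dev s 1 = (fst s, Suc k)"
      using assms(5,8) by (simp add: play_Suc[where t = 0, simplified] \<beta>_def step_def)
    then have p2: "play N ?dev s 2 = step N (fst s, Suc k) (fst s N)"
      using assms(6) unfolding numeral_2_eq_2 play_Suc[of _ _ _ "Suc 0"]
      by (simp add: p1[unfolded One_nat_def] \<beta>_def del: history.simps)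
    have "is_capture N (play N ?dev s 2)"
      using is_capture_step_cop[OF cop' nc'] p2 by simp
    moreover have "\<forall>t<2. \<not> is_capture N (play N ?dev s t)"
      using assms(9) nc' p1 by (auto simp: less_2_cases_iff)
    moreover have "reward N \<epsilon> m (play N ?dev s 2) = c"
      using p2 reward_single_capturer[OF nc' assms(3,4,6)] by (simp add: step_def c_def)
    ultimately show ?thesis using payoff_eq_at_capture_time by metis
  qed
  finally have "c * \<gamma> \<le> c * \<gamma> ^ 2" .
  moreover have "c > 0"
  proof -
    have "N > 2" using assms(2,3) by auto
    then show ?thesis using assms(10) by (simp add: c_def)
  qed
  moreover have "\<gamma> ^ 2 < \<gamma>" using assms(11,12) by (simp add: power2_eq_square)
  ultimately show False by (simp add: mult_le_cancel_left_pos)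
qed

theorem mainTheorem2:
  fixes V :: "'v set" and E :: "'v \<Rightarrow> 'v \<Rightarrow> bool" and N :: nat
    and \<gamma> \<epsilon> :: real and s0 :: "'v state"
    and \<phi> :: "nat \<Rightarrow> nat \<Rightarrow> 'v state \<Rightarrow> 'v"
  assumes "simple_graph V E" and "connected_graph V E" and "card V = 2"
    and "N > 3"
    and "0 < \<epsilon>" and "\<epsilon> \<le> 1 / real (N - 1)"
    and "s0 \<in> game_states N V" and "\<not> is_capture N s0"
    and "0 < \<gamma>" and "\<gamma> < 1"
    and "trigger_choice N V E \<gamma> \<epsilon> \<phi>"
  shows "\<not> positional_trigger N V E \<gamma> \<epsilon> s0 \<phi>"
proof
  assume "positional_trigger N V E \<gamma> \<epsilon> s0 \<phi>"
  define s where "s = (fst s0, 1::nat)"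
  have complete: "complete_graph V E" using assms(1-3) by (rule complete_graph_if_card_eq_2)
  have s: "s \<in> game_states N V" "snd s = 1" "\<not> is_capture N s"
    using assms(4,7,8) by (auto simp: s_def game_states_def is_capture_def)
  have "s \<in> reachable N V E s0" using reachable_pass_turns[OF assms(7,8)] assms(4) by (simp add: s_def)
  with \<open>positional_trigger N V E \<gamma> \<epsilon> s0 \<phi>\<close> assms(4) s obtain f
    where "CR_optimal N V E \<gamma> \<epsilon> 1 f" and "\<phi> 1 3 s = f s"
    unfolding positional_trigger_def by fastforce
  then have "\<phi> 1 3 s = fst s N"
    using CR_optimal_cop_captures[OF complete _ s] assms(4,9,10) by simp
  moreover have "optimal_pair N V E \<gamma> \<epsilon> 3 (\<lambda>n. \<phi> n 3)"
    using assms(4,11) by (simp add: trigger_choice_def)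
  then have "\<phi> 1 3 s \<noteq> fst s N"
    using optimal_pair_cop_defers_capture[where k = 1 and m = 3 and \<phi> = "\<lambda>n. \<phi> n 3", OF complete _ _ _ _ _ s
        assms(5,9,10)] assms(4) by simp
  ultimately show False by contradiction
qed

end
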